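(* In the abstract framework described in the context, assume (A4)–(A8) and the conformity condition. Then there is a constant $C>0$ independent of $p$ such that $$\|u-\Pi^\ell_p u\|_{L^2(\Omega,\Lambda^\ell)}\le C\,\varepsilon_{\ell-1}(p)\,\|u\|_{X(\Lambda^\ell)}\qquad\forall u\in\tilde X_p,\ \forall p\in\mathbb N .$$
   Context: Fix $d\ge2$, $\ell\in\{1,\dots,d-1\}$, and a bounded Lipschitz polyhedron $\Omega\subset\mathbb R^d$. $L^2(\Omega,\Lambda^k)$: $k$-forms with square-integrable coefficients, inner product $(u,v)=\int u\wedge\star v$; $\mathsf d^k$ exterior derivative; $H(\mathsf d,\Omega,\Lambda^k)=\{v\in L^2:\mathsf d^kv\in L^2\}$ (graph norm); $\mathring H(\mathsf d,\Omega,\Lambda^k)$ its subspace of forms with zero trace on $\partial\Omega$. Let $\mathcal M$ be a fixed finite partition of $\Omega$ into pairwise disjoint open polyhedral cells $K$ whose closures cover $\overline\Omega$. For each $K$ and $p\in\mathbb N$ let $W^\ell_p(K)$, $W^{\ell-1}_p(K)$ be spaces of smooth forms on $\overline K$ of degree $\ell$, $\ell-1$; set $\mathring W^k_p=\{v\in\mathring H(\mathsf d,\Omega,\Lambda^k):v|_K\in W^k_p(K)\ \forall K\}$, $k=\ell-1,\ell$. For each $K$ let $X(K,\Lambda^\ell)$, $S(K,\Lambda^{\ell-1})$, $S(K,\Lambda^\ell)$ be Hilbert spaces of forms on $K$ with $W^\ell_p(K)\subset X(K,\Lambda^\ell)$ and $W^{\ell-1}_p(K)\subset S(K,\Lambda^{\ell-1})$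 for all $p$. Global spaces: $X(\Lambda^\ell)=\{v\in\mathring H(\mathsf d,\Omega,\Lambda^\ell):v|_K\in X(K,\Lambda^\ell)\ \forall K\}$ with $\|u\|_{X(\Lambda^\ell)}^2=\|u\|_{H(\mathsf d)}^2+\sum_K\|u|_K\|_{X(K,\Lambda^\ell)}^2$, and analogously $S(\Lambda^k)\subset\mathring H(\mathsf d,\Omega,\Lambda^k)$, $k=\ell-1,\ell$. Let $\tilde X_p(K)=\{u\in X(K,\Lambda^\ell):\mathsf d^\ell u\in\mathsf d^\ell W^\ell_p(K)\}$ and $\tilde X_p=\{u\in X(\Lambda^\ell):\mathsf d^\ell u\in\mathsf d^\ell\mathring W^\ell_p\}$, and assume continuous embeddings $\tilde X_p(K)\subset S(K,\Lambda^\ell)\subset X(K,\Lambda^\ell)$ for all $p$ (hence $\tilde X_p\subset S(\Lambda^\ell)\subset X(\Lambda^\ell)$). (A4) For every $K$ there are linear maps $R_{\ell,K}$ ($\ell$-forms to $(\ell-1)$-forms) and $R_{\ell+1,K}$ ($(\ell+1)$-forms to $\ell$-forms) on smooth forms on $K$ extending to bounded operators $R_{\ell+1,K}:L^2(K,\Lambda^{\ell+1})\to X(K,\Lambda^\ell)$, $R_{\ell,K}:X(K,\Lambda^\ell)\to S(K,\Lambda^{\ell-1})$, with $\mathsf d^{\ell-1}R_{\ell,K}+R_{\ell+1,K}\mathsf d^\ell=\mathrm{Id}$ on $X(K,\Lambda^\ell)$. (A5) $R_{\ell+1,K}\circ\mathsf d^\ell$ maps $W^\ell_p(K)$ into $W^\ell_p(K)$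 for all $K,p$. (A6) For all $K,p$ there are continuous linear projections $\pi^{\ell-1}_{p,K}:S(K,\Lambda^{\ell-1})\to W^{\ell-1}_p(K)$ and $\pi^\ell_{p,K}:S(K,\Lambda^\ell)\to W^\ell_p(K)$ (onto, idempotent). (A7) $\mathsf d^{\ell-1}$ maps $S(K,\Lambda^{\ell-1})$ into $S(K,\Lambda^\ell)$ and $\pi^\ell_{p,K}\mathsf d^{\ell-1}=\mathsf d^{\ell-1}\pi^{\ell-1}_{p,K}$ on $S(K,\Lambda^{\ell-1})$. (A8) There is $\varepsilon_{\ell-1}:\mathbb N\to\mathbb R^+$ with $\varepsilon_{\ell-1}(p)\to0$ such that $\|\mathsf d^{\ell-1}(\phi-\pi^{\ell-1}_{p,K}\phi)\|_{L^2(K)}\le\varepsilon_{\ell-1}(p)\|\phi\|_{S(K,\Lambda^{\ell-1})}$ for all $\phi\in S(K,\Lambda^{\ell-1})$, all $K$. Conformity condition: for $u\in\tilde X_p(K)$ and every $m$-dimensional facet $F$ of $K$ with $\ell\le m\le d$, vanishing trace of $u$ on $F$ implies vanishing trace of $\pi^\ell_{p,K}u$ on $F$, and analogously for $\pi^{\ell-1}_{p,K}$; consequently the elementwise definitions $(\Pi^k_pu)|_K=\pi^k_{p,K}(u|_K)$ give global linear projections $\Pi^\ell_p:S(\Lambda^\ell)\to\mathring W^\ell_p$ and $\Pi^{\ell-1}_p:S(\Lambda^{\ell-1})\to\mathring W^{\ell-1}_p$. *)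

theory Defs
  imports "HOL-Analysis.Analysis"
begin

text \<open>Cells K range over a finite set M of type 'c.
  The types 'f0, 'f1, 'f2 are ambient real vector spaces of (ell-1)-, ell- and (ell+1)-forms
  on cells (restrictions); d0 K, d1 K are the (distributional) exterior derivatives on K.
  A global piecewise form is represented by its family of restrictions, a function 'c => 'fk
  (required to vanish off M).\<close>

definition hilbert_space :: "'a::real_vector set \<Rightarrow> ('a \<Rightarrow> real) \<Rightarrow> bool" where
  "hilbert_space V n \<longleftrightarrow> subspace V \<and>
     (\<exists>ip :: 'a \<Rightarrow> 'a \<Rightarrow> real.
        (\<forall>x\<in>V. \<forall>y\<in>V. ip x y = ip y x) \<and>
        (\<forall>x\<in>V. \<forall>y\<in>V. \<forall>z\<in>V. \<forall>a b. ip (a *\<^sub>R x + b *\<^sub>R y) z = a * ip x z + b * ip y z) \<and>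
        (\<forall>x\<in>V. 0 \<le> ip x x \<and> (ip x x = 0 \<longrightarrow> x = 0)) \<and>
        (\<forall>x\<in>V. n x = sqrt (ip x x))) \<and>
     (\<forall>f :: nat \<Rightarrow> 'a. (\<forall>i. f i \<in> V) \<and>
         (\<forall>e>0. \<exists>N. \<forall>m\<ge>N. \<forall>k\<ge>N. n (f m - f k) < e) \<longrightarrow>
         (\<exists>x\<in>V. (\<lambda>i. n (f i - x)) \<longlonglongrightarrow> 0))"

definition fun_subspace :: "('c \<Rightarrow> 'a::real_vector) set \<Rightarrow> bool" where
  "fun_subspace V \<longleftrightarrow> (\<lambda>_. 0) \<in> V \<and> (\<forall>x\<in>V. \<forall>y\<in>V. (\<lambda>K. x K + y K) \<in> V)
     \<and> (\<forall>x\<in>V. \<forall>a. (\<lambda>K. a *\<^sub>R x K) \<in> V)"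

definition lin_on :: "'a::real_vector set \<Rightarrow> ('a \<Rightarrow> 'b::real_vector) \<Rightarrow> bool" where
  "lin_on V f \<longleftrightarrow> (\<forall>x\<in>V. \<forall>y\<in>V. \<forall>a b. f (a *\<^sub>R x + b *\<^sub>R y) = a *\<^sub>R f x + b *\<^sub>R f y)"

definition bounded_on :: "'a set \<Rightarrow> ('a \<Rightarrow> real) \<Rightarrow> ('b \<Rightarrow> real) \<Rightarrow> ('a \<Rightarrow> 'b) \<Rightarrow> bool" where
  "bounded_on V nV nW f \<longleftrightarrow> (\<exists>c. \<forall>x\<in>V. nW (f x) \<le> c * nV x)"

definition elementwise :: "'c set \<Rightarrow> ('c \<Rightarrow> 'a \<Rightarrow> 'a::zero) \<Rightarrow> ('c \<Rightarrow> 'a) \<Rightarrow> ('c \<Rightarrow> 'a)" where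
  "elementwise M proj u = (\<lambda>K. if K \<in> M then proj K (u K) else 0)"

definition glob_space :: "'c set \<Rightarrow> ('c \<Rightarrow> 'a) set \<Rightarrow> ('c \<Rightarrow> 'a set) \<Rightarrow> ('c \<Rightarrow> 'a) set" where
  "glob_space M Hdz V = {v \<in> Hdz. \<forall>K\<in>M. v K \<in> V K}"

text \<open>Global L2 norm (cells partition Omega up to a null set).\<close>
definition glob_L2 :: "'c set \<Rightarrow> ('c \<Rightarrow> 'a \<Rightarrow> real) \<Rightarrow> ('c \<Rightarrow> 'a) \<Rightarrow> real" where
  "glob_L2 M nL2 u = sqrt (\<Sum>K\<in>M. (nL2 K (u K))\<^sup>2)"

definition glob_X_norm :: "'c set \<Rightarrow> ('c \<Rightarrow> 'a \<Rightarrow> real) \<Rightarrow> ('c \<Rightarrow> 'b \<Rightarrow> real) \<Rightarrow>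
    ('c \<Rightarrow> 'a \<Rightarrow> 'b) \<Rightarrow> ('c \<Rightarrow> 'a \<Rightarrow> real) \<Rightarrow> ('c \<Rightarrow> 'a) \<Rightarrow> real" where
  "glob_X_norm M nL2a nL2b d nX u =
     sqrt (\<Sum>K\<in>M. (nL2a K (u K))\<^sup>2 + (nL2b K (d K (u K)))\<^sup>2 + (nX K (u K))\<^sup>2)"

definition loc_Xt :: "'a set \<Rightarrow> ('a \<Rightarrow> 'b) \<Rightarrow> 'a set \<Rightarrow> 'a set" where
  "loc_Xt XK dK WK = {u \<in> XK. \<exists>w\<in>WK. dK u = dK w}"

definition glob_Xt :: "'c set \<Rightarrow> ('c \<Rightarrow> 'a) set \<Rightarrow> ('c \<Rightarrow> 'a set) \<Rightarrow> ('c \<Rightarrow> 'a \<Rightarrow> 'b)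
    \<Rightarrow> ('c \<Rightarrow> 'a set) \<Rightarrow> ('c \<Rightarrow> 'a) set" where
  "glob_Xt M Hdz X d W = {u \<in> glob_space M Hdz X.
      \<exists>w\<in>glob_space M Hdz W. \<forall>K\<in>M. d K (u K) = d K (w K)}"

end

theory Submission
  imports Defs
begin

text \<open>On a cell, (A4) splits x = d\<phi> + r with \<phi> = R x and r = R(dx). For x in tilde-X_p the
  part r lies in W_p by (A5), so \<pi> reproduces it, while the commuting property (A7) moves \<pi>
  through d. Hence x - \<pi>x = d(\<phi> - \<pi>\<phi>), whose L2 norm is at most \<epsilon>(p) \<parallel>\<phi>\<parallel>_S \<le> c \<epsilon>(p) \<parallel>x\<parallel>_X
  by (A8) and the boundedness of R; finitely many cells make c uniform, and summing the squared
  cellwise estimates gives the global one.\<close>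

lemma hilbert_space_subspace: "hilbert_space V n \<Longrightarrow> subspace V"
  unfolding hilbert_space_def by (erule conjunct1)

lemma hilbert_space_norm_nonneg:
  assumes "hilbert_space V n" and "x \<in> V"
  shows "0 \<le> n x"
proof -
  from assms(1) obtain ip :: "'a \<Rightarrow> 'a \<Rightarrow> real"
    where "\<forall>x\<in>V. 0 \<le> ip x x \<and> (ip x x = 0 \<longrightarrow> x = 0)" and "\<forall>x\<in>V. n x = sqrt (ip x x)"
    unfolding hilbert_space_def by (elim conjE exE)
  with assms(2) show ?thesis by simp
qed

lemma bounded_on_uniform_finite:
  assumes "finite M"
    and bounded: "\<forall>K\<in>M. bounded_on (V K) (nV K) (nW K) (f K)"
    and nonneg: "\<forall>K\<in>M. \<forall>x\<in>V K. 0 \<le> nV K x"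
  shows "\<exists>C>0. \<forall>K\<in>M. \<forall>x\<in>V K. nW K (f K x) \<le> C * nV K x"
proof -
  from bounded obtain c where c: "\<forall>K\<in>M. \<forall>x\<in>V K. nW K (f K x) \<le> c K * nV K x"
    unfolding bounded_on_def by metis
  define C where "C = 1 + (\<Sum>K\<in>M. \<bar>c K\<bar>)"
  have "nW K (f K x) \<le> C * nV K x" if K: "K \<in> M" and x: "x \<in> V K" for K x
  proof -
    have "\<bar>c K\<bar> \<le> (\<Sum>K\<in>M. \<bar>c K\<bar>)"
      using \<open>finite M\<close> K by (intro member_le_sum) auto
    then have "c K \<le> C" unfolding C_def by linarith
    then have "c K * nV K x \<le> C * nV K x"
      using nonneg K x by (intro mult_right_mono) auto
    with c K x show ?thesis by fastforce
  qed
  moreover have "C > 0" unfolding C_def by (simp add: add_pos_nonneg sum_nonneg)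
  ultimately show ?thesis by blast
qed

lemma commuting_projection_error:
  assumes "linear d"
    and decomposition: "\<forall>u\<in>X. d (R u) + R' (d' u) = u"
    and R_range: "R ` X \<subseteq> T"
    and W_invariant: "\<forall>w\<in>W. R' (d' w) \<in> W"
    and "W \<subseteq> X" and "loc_Xt X d' W \<subseteq> S"
    and "lin_on S \<pi>" and \<pi>_W: "\<forall>w\<in>W. \<pi> w = w"
    and commuting: "\<forall>v\<in>T. d v \<in> S \<and> \<pi> (d v) = d (\<pi>' v)"
    and x: "x \<in> loc_Xt X d' W"
  shows "x - \<pi> x = d (R x - \<pi>' (R x))"
proof -
  from x obtain w where xX: "x \<in> X" and w: "w \<in> W" and dw: "d' x = d' w"
    unfolding loc_Xt_def by blast
  define \<phi> r where "\<phi> = R x" and "r = R' (d' x)"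
  have \<phi>: "\<phi> \<in> T" using R_range xX unfolding \<phi>_def by blast
  have rW: "r \<in> W" using W_invariant w unfolding r_def dw by blast
  have rS: "r \<in> S"
    using rW \<open>W \<subseteq> X\<close> \<open>loc_Xt X d' W \<subseteq> S\<close> unfolding loc_Xt_def by blast
  have x_split: "x = d \<phi> + r" using decomposition xX unfolding \<phi>_def r_def by simp
  have "\<pi> (1 *\<^sub>R d \<phi> + 1 *\<^sub>R r) = 1 *\<^sub>R \<pi> (d \<phi>) + 1 *\<^sub>R \<pi> r"
    using \<open>lin_on S \<pi>\<close> commuting \<phi> rS unfolding lin_on_def by blast
  then have "\<pi> x = d (\<pi>' \<phi>) + r" using x_split commuting \<phi> \<pi>_W rW by simp
  with x_split have "x - \<pi> x = d (\<phi> - \<pi>' \<phi>)"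
    by (simp add: linear_diff[OF \<open>linear d\<close>])
  then show ?thesis unfolding \<phi>_def .
qed

lemma projection_error_bound:
  fixes e c :: real
  assumes "linear d"
    and "\<forall>u\<in>X. d (R u) + R' (d' u) = u"
    and "R ` X \<subseteq> T"
    and "\<forall>w\<in>W. R' (d' w) \<in> W"
    and "subspace X" and "W \<subseteq> X" and "loc_Xt X d' W \<subseteq> S"
    and "lin_on S \<pi>" and \<pi>_range: "\<pi> ` S \<subseteq> W" and "\<forall>w\<in>W. \<pi> w = w"
    and "\<forall>v\<in>T. d v \<in> S \<and> \<pi> (d v) = d (\<pi>' v)"
    and estimate: "\<forall>\<phi>\<in>T. nL (d (\<phi> - \<pi>' \<phi>)) \<le> e * nT \<phi>"
    and R_bound: "\<forall>x\<in>X. nT (R x) \<le> c * nX x" and "0 \<le> e"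
    and x: "x \<in> loc_Xt X d' W"
  shows "x - \<pi> x \<in> X \<and> nL (x - \<pi> x) \<le> c * e * nX x"
proof
  have xX: "x \<in> X" using x unfolding loc_Xt_def by blast
  have "\<pi> x \<in> X" using x \<pi>_range \<open>W \<subseteq> X\<close> \<open>loc_Xt X d' W \<subseteq> S\<close> by blast
  with \<open>subspace X\<close> xX show "x - \<pi> x \<in> X" by (rule subspace_diff)
  have "x - \<pi> x = d (R x - \<pi>' (R x))"
    using assms by (intro commuting_projection_error[where T = T]) auto
  then have "nL (x - \<pi> x) \<le> e * nT (R x)"
    using estimate \<open>R ` X \<subseteq> T\<close> xX by auto
  also have "\<dots> \<le> e * (c * nX x)"
    using R_bound xX \<open>0 \<le> e\<close> by (auto intro: mult_left_mono)
  finally show "nL (x - \<pi> x) \<le> c * e * nX x" by (simp add: mult.left_commute)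
qed

lemma glob_L2_le_glob_X_norm:
  assumes "finite M" and "0 \<le> c"
    and cellwise: "\<forall>K\<in>M. 0 \<le> nL K (v K) \<and> nL K (v K) \<le> c * nX K (u K)"
  shows "glob_L2 M nL v \<le> c * glob_X_norm M nL nL' d nX u"
proof -
  let ?N = "\<lambda>K. (nL K (u K))\<^sup>2 + (nL' K (d K (u K)))\<^sup>2 + (nX K (u K))\<^sup>2"
  have "(nL K (v K))\<^sup>2 \<le> c\<^sup>2 * ?N K" if "K \<in> M" for K
  proof -
    have "(nL K (v K))\<^sup>2 \<le> (c * nX K (u K))\<^sup>2"
      using cellwise that by (intro power_mono) auto
    also have "\<dots> \<le> c\<^sup>2 * ?N K"
      by (simp add: power_mult_distrib mult_left_mono)
    finally show ?thesis .
  qed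
  then have "(\<Sum>K\<in>M. (nL K (v K))\<^sup>2) \<le> c\<^sup>2 * (\<Sum>K\<in>M. ?N K)"
    by (simp add: sum_distrib_left sum_mono)
  then have "glob_L2 M nL v \<le> sqrt (c\<^sup>2 * (\<Sum>K\<in>M. ?N K))"
    unfolding glob_L2_def by (rule real_sqrt_le_mono)
  also have "\<dots> = c * glob_X_norm M nL nL' d nX u"
    unfolding glob_X_norm_def
    by (simp only: real_sqrt_mult real_sqrt_abs abs_of_nonneg[OF \<open>0 \<le> c\<close>])
  finally show ?thesis .
qed

theorem lemma3p1:
  fixes M :: "'c set"
    and L2_0 :: "'c \<Rightarrow> 'f0::real_vector set" and nL0 :: "'c \<Rightarrow> 'f0 \<Rightarrow> real"
    and L2_1 :: "'c \<Rightarrow> 'f1::real_vector set" and nL1 :: "'c \<Rightarrow> 'f1 \<Rightarrow> real"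
    and L2_2 :: "'c \<Rightarrow> 'f2::real_vector set" and nL2 :: "'c \<Rightarrow> 'f2 \<Rightarrow> real"
    and d0 :: "'c \<Rightarrow> 'f0 \<Rightarrow> 'f1" and d1 :: "'c \<Rightarrow> 'f1 \<Rightarrow> 'f2"
    and X :: "'c \<Rightarrow> 'f1 set" and nX :: "'c \<Rightarrow> 'f1 \<Rightarrow> real"
    and S0 :: "'c \<Rightarrow> 'f0 set" and nS0 :: "'c \<Rightarrow> 'f0 \<Rightarrow> real"
    and S1 :: "'c \<Rightarrow> 'f1 set" and nS1 :: "'c \<Rightarrow> 'f1 \<Rightarrow> real"
    and W0 :: "nat \<Rightarrow> 'c \<Rightarrow> 'f0 set" and W1 :: "nat \<Rightarrow> 'c \<Rightarrow> 'f1 set"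
    and R1 :: "'c \<Rightarrow> 'f1 \<Rightarrow> 'f0" and R2 :: "'c \<Rightarrow> 'f2 \<Rightarrow> 'f1"
    and pi0 :: "nat \<Rightarrow> 'c \<Rightarrow> 'f0 \<Rightarrow> 'f0" and pi1 :: "nat \<Rightarrow> 'c \<Rightarrow> 'f1 \<Rightarrow> 'f1"
    and eps :: "nat \<Rightarrow> real"
    and Hdz0 :: "('c \<Rightarrow> 'f0) set" and Hdz1 :: "('c \<Rightarrow> 'f1) set"
  assumes fin: "finite M"
    and L2_hilbert: "\<forall>K\<in>M. hilbert_space (L2_0 K) (nL0 K) \<and> hilbert_space (L2_1 K) (nL1 K)
                        \<and> hilbert_space (L2_2 K) (nL2 K)"
    and d_linear: "\<forall>K\<in>M. linear (d0 K) \<and> linear (d1 K)"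
    and Hdz0_props: "fun_subspace Hdz0"
       "\<forall>v\<in>Hdz0. (\<forall>K\<in>M. v K \<in> L2_0 K \<and> d0 K (v K) \<in> L2_1 K) \<and> (\<forall>K. K \<notin> M \<longrightarrow> v K = 0)"
    and Hdz1_props: "fun_subspace Hdz1"
       "\<forall>v\<in>Hdz1. (\<forall>K\<in>M. v K \<in> L2_1 K \<and> d1 K (v K) \<in> L2_2 K) \<and> (\<forall>K. K \<notin> M \<longrightarrow> v K = 0)"
    and spaces_hilbert: "\<forall>K\<in>M. hilbert_space (X K) (nX K) \<and> hilbert_space (S0 K) (nS0 K)
                        \<and> hilbert_space (S1 K) (nS1 K)"
    and X_Hd: "\<forall>K\<in>M. X K \<subseteq> {v \<in> L2_1 K. d1 K v \<in> L2_2 K}"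
    and W_props: "\<forall>p. \<forall>K\<in>M. subspace (W1 p K) \<and> W1 p K \<subseteq> X K
                        \<and> subspace (W0 p K) \<and> W0 p K \<subseteq> S0 K"
    and embed_Xt_S: "\<forall>p. \<forall>K\<in>M. loc_Xt (X K) (d1 K) (W1 p K) \<subseteq> S1 K
                        \<and> bounded_on (loc_Xt (X K) (d1 K) (W1 p K)) (nX K) (nS1 K) id"
    and embed_S_X: "\<forall>K\<in>M. S1 K \<subseteq> X K \<and> bounded_on (S1 K) (nS1 K) (nX K) id"
    and A4: "\<forall>K\<in>M. lin_on (L2_2 K) (R2 K) \<and> R2 K ` L2_2 K \<subseteq> X K
                 \<and> bounded_on (L2_2 K) (nL2 K) (nX K) (R2 K)
                 \<and> lin_on (X K) (R1 K) \<and> R1 K ` X K \<subseteq> S0 K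
                 \<and> bounded_on (X K) (nX K) (nS0 K) (R1 K)
                 \<and> (\<forall>u\<in>X K. d0 K (R1 K u) + R2 K (d1 K u) = u)"
    and A5: "\<forall>p. \<forall>K\<in>M. \<forall>u\<in>W1 p K. R2 K (d1 K u) \<in> W1 p K"
    and A6: "\<forall>p. \<forall>K\<in>M.
                 lin_on (S0 K) (pi0 p K) \<and> pi0 p K ` S0 K \<subseteq> W0 p K
                 \<and> (\<forall>w\<in>W0 p K. pi0 p K w = w) \<and> bounded_on (S0 K) (nS0 K) (nS0 K) (pi0 p K)
               \<and> lin_on (S1 K) (pi1 p K) \<and> pi1 p K ` S1 K \<subseteq> W1 p K
                 \<and> (\<forall>w\<in>W1 p K. pi1 p K w = w) \<and> bounded_on (S1 K) (nS1 K) (nS1 K) (pi1 p K)"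
    and A7: "\<forall>p. \<forall>K\<in>M. \<forall>v\<in>S0 K. d0 K v \<in> S1 K \<and> pi1 p K (d0 K v) = d0 K (pi0 p K v)"
    and A8: "\<forall>p. eps p > 0" "eps \<longlonglongrightarrow> 0"
       "\<forall>p. \<forall>K\<in>M. \<forall>\<phi>\<in>S0 K. nL1 K (d0 K (\<phi> - pi0 p K \<phi>)) \<le> eps p * nS0 K \<phi>"
    and conformity:
       "\<forall>p. \<forall>u\<in>glob_space M Hdz1 S1. elementwise M (pi1 p) u \<in> glob_space M Hdz1 (W1 p)"
       "\<forall>p. \<forall>u\<in>glob_space M Hdz0 S0. elementwise M (pi0 p) u \<in> glob_space M Hdz0 (W0 p)"
  shows "\<exists>C>0. \<forall>p. \<forall>u\<in>glob_Xt M Hdz1 X d1 (W1 p).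
           glob_L2 M nL1 (u - elementwise M (pi1 p) u)
             \<le> C * eps p * glob_X_norm M nL1 nL2 d1 nX u"
proof -
  \<comment> \<open>Conformity only makes \<Pi> land in the global discrete space; the estimate is purely cellwise.\<close>
  have "\<forall>K\<in>M. \<forall>x\<in>X K. 0 \<le> nX K x"
    using spaces_hilbert hilbert_space_norm_nonneg by blast
  then obtain C where "C > 0" and R1_bound: "\<forall>K\<in>M. \<forall>x\<in>X K. nS0 K (R1 K x) \<le> C * nX K x"
    using bounded_on_uniform_finite[OF fin, of X nX nS0 R1] A4 by blast
  have cell: "0 \<le> nL1 K (x - pi1 p K x) \<and> nL1 K (x - pi1 p K x) \<le> C * eps p * nX K x"
    if K: "K \<in> M" and x: "x \<in> loc_Xt (X K) (d1 K) (W1 p K)" for K x p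
  proof -
    have "x - pi1 p K x \<in> X K \<and> nL1 K (x - pi1 p K x) \<le> C * eps p * nX K x"
      by (rule projection_error_bound[where d = "d0 K" and d' = "d1 K" and R = "R1 K" and R' = "R2 K"
            and T = "S0 K" and S = "S1 K" and W = "W1 p K" and \<pi>' = "pi0 p K" and nT = "nS0 K"])
        (simp_all add: d_linear A4 A5 W_props embed_Xt_S A6 A7 A8 R1_bound less_imp_le K x
           hilbert_space_subspace[of "X K" "nX K"] spaces_hilbert)
    then show ?thesis using X_Hd L2_hilbert hilbert_space_norm_nonneg K by blast
  qed
  show ?thesis
  proof (intro exI[of _ C] conjI \<open>C > 0\<close> allI ballI)
    fix p u assume "u \<in> glob_Xt M Hdz1 X d1 (W1 p)"
    then have "\<forall>K\<in>M. u K \<in> loc_Xt (X K) (d1 K) (W1 p K)"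
      unfolding glob_Xt_def glob_space_def loc_Xt_def by blast
    then have cellwise: "\<forall>K\<in>M. 0 \<le> nL1 K ((u - elementwise M (pi1 p) u) K)
        \<and> nL1 K ((u - elementwise M (pi1 p) u) K) \<le> C * eps p * nX K (u K)"
      using cell by (simp add: elementwise_def)
    have "0 \<le> C * eps p" using \<open>C > 0\<close> A8(1) by (simp add: less_imp_le)
    from this cellwise show "glob_L2 M nL1 (u - elementwise M (pi1 p) u)
        \<le> C * eps p * glob_X_norm M nL1 nL2 d1 nX u"
      by (rule glob_L2_le_glob_X_norm[OF fin])
  qed
qed

end
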